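(* Let $n$ be a positive integer, let $m$ be a real number with $7n^{3/5}\leq m\leq n$, and let $T\geq 0$ be an integer. Suppose that for every set $\Sigma'\subset[n]$ with $|\Sigma'|\geq m-7n^{3/5}$, every permutation of $\Sigma'$ contains a pair of close twins of length at least $T$. Then for every set $\Sigma\subset[n]$ with $|\Sigma|\geq m$, every permutation of $\Sigma$ contains a pair of close twins of length at least $T+n^{1/5}$.
   Context: A permutation of a finite set $\Sigma\subset\mathbb{N}$ is a sequence in which every element of $\Sigma$ appears exactly once; a subpermutation of a permutation is a subsequence of it. Two sequences $(a_1,\dots,a_L)$ and $(b_1,\dots,b_L)$ of distinct numbers are order-isomorphic if for all $i,j$: $a_i<a_j \iff b_i<b_j$. Two subpermutations of a permutation are called twins if they are order-isomorphic and disjoint (share no symbol); their length is their common number of entries. For a fixed $n$, twins $(a_1,\dots,a_L)$ and $(b_1,\dots,b_L)$ (where $a_i$ corresponds to $b_i$) are called close if $|b_i-a_i|\leq n^{2/5}$ for all $i$. The empty pair of subpermutations counts as close twins of length $0$. *)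

theory Defs
  imports Complex_Main "HOL-Library.Sublist"
begin

definition is_perm_of :: "nat list \<Rightarrow> nat set \<Rightarrow> bool" where
  "is_perm_of \<pi> S \<longleftrightarrow> distinct \<pi> \<and> set \<pi> = S"

definition order_iso :: "nat list \<Rightarrow> nat list \<Rightarrow> bool" where
  "order_iso a b \<longleftrightarrow> length a = length b \<and>
     (\<forall>i < length a. \<forall>j < length a. (a ! i < a ! j) \<longleftrightarrow> (b ! i < b ! j))"

definition twins :: "nat list \<Rightarrow> nat list \<Rightarrow> nat list \<Rightarrow> bool" where
  "twins \<pi> a b \<longleftrightarrow> subseq a \<pi> \<and> subseq b \<pi> \<and> order_iso a b \<and> set a \<inter> set b = {}"

definition close_twins :: "nat \<Rightarrow> nat list \<Rightarrow> nat list \<Rightarrow> nat list \<Rightarrow> bool" where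
  "close_twins n \<pi> a b \<longleftrightarrow> twins \<pi> a b \<and>
     (\<forall>i < length a. \<bar>real (b ! i) - real (a ! i)\<bar> \<le> real n powr (2/5))"

end

theory Submission
  imports Defs
begin

text \<open>Write s = n^(1/5) and cut the values into blocks of about s^2 consecutive numbers.
  Greedily, a prefix of about 5 s^3 entries of \<pi> contains at least s^3 triples of values,
  each inside one block, with pairwise disjoint value ranges. Each triple offers three entries
  of the prefix, and two applications of Erdos-Szekeres yield s triples on which two of the
  three coordinates occur in the same order along \<pi>; these coordinates form twins whose
  corresponding entries share a block and are therefore close. Deleting the prefix and the at
  most s blocks used leaves at least m - 7 s^3 values, whose close twins from the hypothesis
  compare with the new ones exactly as their block-mates do, since they avoid those blocks.
  Concatenating gives close twins of length T + s.\<close>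

section \<open>Erdos-Szekeres\<close>

definition concordant_on :: "('a \<Rightarrow> nat) \<Rightarrow> ('a \<Rightarrow> nat) \<Rightarrow> 'a set \<Rightarrow> bool" where
  "concordant_on f g S \<longleftrightarrow> (\<forall>x\<in>S. \<forall>y\<in>S. f x < f y \<longrightarrow> g x < g y)"

lemma concordant_on_subset: "concordant_on f g S \<Longrightarrow> S' \<subseteq> S \<Longrightarrow> concordant_on f g S'"
  unfolding concordant_on_def by blast

definition concordant_chains :: "('a \<Rightarrow> nat) \<Rightarrow> ('a \<Rightarrow> nat) \<Rightarrow> 'a set \<Rightarrow> 'a \<Rightarrow> 'a set set" where
  "concordant_chains f g C c = {S. S \<subseteq> C \<and> concordant_on f g S \<and> c \<in> S \<and> (\<forall>y\<in>S. f y \<le> f c)}"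

definition chain_height :: "('a \<Rightarrow> nat) \<Rightarrow> ('a \<Rightarrow> nat) \<Rightarrow> 'a set \<Rightarrow> 'a \<Rightarrow> nat" where
  "chain_height f g C c = Max (card ` concordant_chains f g C c)"

lemma finite_concordant_chains: "finite C \<Longrightarrow> finite (concordant_chains f g C c)"
  by (rule finite_subset[of _ "Pow C"]) (auto simp: concordant_chains_def)

lemma singleton_concordant_chain: "c \<in> C \<Longrightarrow> {c} \<in> concordant_chains f g C c"
  by (auto simp: concordant_chains_def concordant_on_def)

lemma card_le_chain_height:
  "finite C \<Longrightarrow> S \<in> concordant_chains f g C c \<Longrightarrow> card S \<le> chain_height f g C c"
  unfolding chain_height_def by (rule Max_ge) (simp_all add: finite_concordant_chains)

lemma chain_height_attained:
  assumes "finite C" "c \<in> C"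
  obtains S where "S \<in> concordant_chains f g C c" "card S = chain_height f g C c"
proof -
  have "chain_height f g C c \<in> card ` concordant_chains f g C c"
    unfolding chain_height_def
    using finite_concordant_chains[OF assms(1)] singleton_concordant_chain[OF assms(2), of f g]
    by (intro Max_in) blast+
  then show ?thesis using that by (metis imageE)
qed

lemma chain_height_pos: "finite C \<Longrightarrow> c \<in> C \<Longrightarrow> 1 \<le> chain_height f g C c"
  using card_le_chain_height[OF _ singleton_concordant_chain] by fastforce

text \<open>A longest chain ending at x extends by y.\<close>
lemma chain_height_less:
  assumes fin: "finite C" and inj_f: "inj_on f C" and "x \<in> C" "y \<in> C" "f x < f y" "g x < g y"
  shows "chain_height f g C x < chain_height f g C y"
proof -
  obtain S where S: "S \<in> concordant_chains f g C x" "card S = chain_height f g C x"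
    using chain_height_attained[OF fin \<open>x \<in> C\<close>] by blast
  then have SC: "S \<subseteq> C" and conc: "concordant_on f g S" and below: "\<forall>z\<in>S. f z \<le> f x"
    and "x \<in> S" by (simp_all add: concordant_chains_def)
  have g_below: "g z \<le> g x" if "z \<in> S" for z
  proof (cases "z = x")
    case False
    then have "f z < f x"
      using that below SC \<open>x \<in> C\<close> inj_on_eq_iff[OF inj_f] by (metis le_neq_implies_less subsetD)
    then show ?thesis using conc that \<open>x \<in> S\<close> unfolding concordant_on_def by (meson less_imp_le)
  qed simp
  have "y \<notin> S" using below \<open>f x < f y\<close> by force
  have "concordant_on f g (insert y S)"
    unfolding concordant_on_def
  proof (intro ballI impI)
    fix z w assume zw: "z \<in> insert y S" "w \<in> insert y S" "f z < f w"
    show "g z < g w"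
    proof (cases "w = y")
      case True
      then show ?thesis using zw g_below[of z] \<open>g x < g y\<close> by auto
    next
      case False
      then have "w \<in> S" "z \<in> S" using zw below \<open>f x < f y\<close> by force+
      then show ?thesis using conc zw(3) unfolding concordant_on_def by blast
    qed
  qed
  then have "insert y S \<in> concordant_chains f g C y"
    using SC below \<open>f x < f y\<close> \<open>y \<in> C\<close> by (force simp: concordant_chains_def)
  then have "card (insert y S) \<le> chain_height f g C y" by (rule card_le_chain_height[OF fin])
  moreover have "card (insert y S) = chain_height f g C x + 1"
    using S(2) \<open>y \<notin> S\<close> finite_subset[OF SC fin] by simp
  ultimately show ?thesis by simp
qed

text \<open>Erdos-Szekeres: if no chain height reaches r, the heights take fewer than r values,
  so s elements share one height, and any two of them are discordant.\<close>
lemma erdos_szekeres: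
  fixes f g :: "'a \<Rightarrow> nat"
  assumes fin: "finite C" and inj_f: "inj_on f C" and inj_g: "inj_on g C"
    and card_C: "(r - 1) * (s - 1) < card C" and "1 \<le> r"
  shows "(\<exists>S\<subseteq>C. card S = r \<and> concordant_on f g S) \<or>
         (\<exists>S\<subseteq>C. card S = s \<and> (\<forall>x\<in>S. \<forall>y\<in>S. f x < f y \<longrightarrow> g y < g x))"
proof (cases "\<exists>c\<in>C. r \<le> chain_height f g C c")
  case True
  then obtain c S where "c \<in> C" "S \<in> concordant_chains f g C c" "r \<le> card S"
    using chain_height_attained[OF fin] by metis
  moreover obtain S' where "S' \<subseteq> S" "card S' = r"
    using obtain_subset_with_card_n[of r S] \<open>r \<le> card S\<close> by auto
  ultimately show ?thesis
    using concordant_on_subset by (intro disjI1 exI[of _ S']) (auto simp: concordant_chains_def)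
next
  case False
  define D where "D l = {c\<in>C. chain_height f g C c = l}" for l
  have "\<exists>l. s \<le> card (D l)"
  proof (rule ccontr)
    assume "\<not> ?thesis"
    then have large_fails: "\<not> s \<le> card (D l)" for l by blast
    have small: "card (D l) \<le> s - 1" for l using large_fails[of l] by arith
    have "C = (\<Union>l\<in>{1..<r}. D l)" using False chain_height_pos[OF fin] by (force simp: D_def)
    then have "card C \<le> (\<Sum>l\<in>{1..<r}. card (D l))" using card_UN_le[of "{1..<r}" D] by simp
    also have "\<dots> \<le> (\<Sum>l\<in>{1..<r}. s - 1)" by (intro sum_mono small)
    finally show False using card_C by simp
  qed
  then obtain l S where S: "S \<subseteq> D l" "card S = s"
    using obtain_subset_with_card_n by meson
  have "g y < g x" if "x \<in> S" "y \<in> S" "f x < f y" for x y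
  proof (rule ccontr)
    assume "\<not> g y < g x"
    moreover have "x \<in> C" "y \<in> C" "x \<noteq> y" using that S(1) by (auto simp: D_def)
    ultimately have "g x < g y" using inj_on_eq_iff[OF inj_g] by (metis nat_neq_iff)
    then have "chain_height f g C x < chain_height f g C y"
      using chain_height_less[OF fin inj_f \<open>x \<in> C\<close> \<open>y \<in> C\<close> \<open>f x < f y\<close>] by blast
    moreover have "x \<in> D l" "y \<in> D l" using that S(1) by auto
    ultimately show False by (simp add: D_def)
  qed
  moreover have "S \<subseteq> C" using S by (auto simp: D_def)
  ultimately show ?thesis using S by blast
qed

lemma two_of_three_concordant:
  fixes f1 f2 f3 :: "'a \<Rightarrow> nat"
  assumes fin: "finite C" and inj1: "inj_on f1 C" and inj2: "inj_on f2 C" and inj3: "inj_on f3 C"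
    and "1 \<le> k" and card_C: "(k - 1) ^ 3 < card C"
  shows "\<exists>S\<subseteq>C. card S = k \<and>
           (concordant_on f1 f2 S \<or> concordant_on f1 f3 S \<or> concordant_on f2 f3 S)"
proof -
  have "(k - 1) * ((k - 1)\<^sup>2 + 1 - 1) < card C"
    using card_C by (simp add: power3_eq_cube power2_eq_square)
  from erdos_szekeres[OF fin inj1 inj2 this \<open>1 \<le> k\<close>] show ?thesis
  proof (elim disjE exE conjE)
    fix D assume D: "D \<subseteq> C" "card D = (k - 1)\<^sup>2 + 1"
      and anti12: "\<forall>x\<in>D. \<forall>y\<in>D. f1 x < f1 y \<longrightarrow> f2 y < f2 x"
    have "(k - 1) * (k - 1) < card D" using D by (simp add: power2_eq_square)
    from erdos_szekeres[OF finite_subset[OF D(1) fin] inj_on_subset[OF inj1 D(1)]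
        inj_on_subset[OF inj3 D(1)] this \<open>1 \<le> k\<close>] show ?thesis
    proof (elim disjE exE conjE)
      fix S assume S: "S \<subseteq> D" "card S = k" and anti13: "\<forall>x\<in>S. \<forall>y\<in>S. f1 x < f1 y \<longrightarrow> f3 y < f3 x"
      have "concordant_on f2 f3 S" unfolding concordant_on_def
      proof (intro ballI impI)
        fix x y assume xy: "x \<in> S" "y \<in> S" "f2 x < f2 y"
        then have "f1 x \<noteq> f1 y" using inj_onD[OF inj1] S D by blast
        moreover have "\<not> f1 x < f1 y" using anti12 xy S by (meson less_not_sym subsetD)
        ultimately show "f3 x < f3 y" using anti13 xy by (meson linorder_neqE_nat)
      qed
      then show ?thesis using S D by blast
    qed (use D in blast)
  qed blast
qed

section \<open>Block triples in a prefix\<close>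

definition position :: "nat list \<Rightarrow> nat \<Rightarrow> nat" where
  "position P x = (LEAST i. i < length P \<and> P ! i = x)"

lemma position_nth: "distinct P \<Longrightarrow> i < length P \<Longrightarrow> position P (P ! i) = i"
  unfolding position_def by (rule Least_equality) (auto simp: nth_eq_iff_index_eq)

lemma inj_on_position: "distinct P \<Longrightarrow> inj_on (position P) (set P)"
  by (auto simp: inj_on_def in_set_conv_nth position_nth)

lemma sorted_wrt_position_filter:
  "distinct P \<Longrightarrow> sorted_wrt (\<lambda>x y. position P x < position P y) (filter Q P)"
  by (intro sorted_wrt_filter) (simp add: sorted_wrt_iff_nth_less position_nth)

lemma sorted_wrt_position_unique:
  assumes "distinct P" "set xs = set ys" "set xs \<subseteq> set P"
    "sorted_wrt (\<lambda>x y. position P x < position P y) xs"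
    "sorted_wrt (\<lambda>x y. position P x < position P y) ys"
  shows "xs = ys"
proof -
  have "sorted_wrt (<) (map (position P) xs)" "sorted_wrt (<) (map (position P) ys)"
    using assms(4,5) by (simp_all add: sorted_wrt_map)
  then have "map (position P) xs = map (position P) ys"
    using assms(2) by (intro sorted_distinct_set_unique) (auto simp: strict_sorted_iff)
  moreover have "inj_on (position P) (set xs \<union> set ys)"
    using assms(1-3) inj_on_position inj_on_subset by (metis sup.idem)
  ultimately show ?thesis using inj_on_map_eq_map by blast
qed

lemma filter_images_common_order:
  assumes dP: "distinct P" and g1P: "g1 ` S \<subseteq> set P" and g2P: "g2 ` S \<subseteq> set P"
    and inj1: "inj_on g1 S"
    and conc: "concordant_on (position P \<circ> g1) (position P \<circ> g2) S"
  obtains Ls where "set Ls = S" "filter (\<lambda>v. v \<in> g1 ` S) P = map g1 Ls"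
    "filter (\<lambda>v. v \<in> g2 ` S) P = map g2 Ls"
proof
  define xs where "xs = filter (\<lambda>v. v \<in> g1 ` S) P"
  define Ls where "Ls = map (inv_into S g1) xs"
  have set_xs: "set xs = g1 ` S" using g1P by (auto simp: xs_def)
  show map1: "filter (\<lambda>v. v \<in> g1 ` S) P = map g1 Ls" unfolding Ls_def map_map xs_def[symmetric]
    by (rule map_idI[symmetric]) (use set_xs in \<open>auto simp: f_inv_into_f\<close>)
  show set_Ls: "set Ls = S" unfolding Ls_def using set_xs inj1 by simp
  have "sorted_wrt (\<lambda>x y. position P x < position P y) (map g1 Ls)"
    unfolding map1[symmetric] by (rule sorted_wrt_position_filter[OF dP])
  then have "sorted_wrt (\<lambda>T T'. position P (g1 T) < position P (g1 T')) Ls"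
    by (simp add: sorted_wrt_map)
  then have "sorted_wrt (\<lambda>T T'. position P (g2 T) < position P (g2 T')) Ls"
    by (rule sorted_wrt_mono_rel[rotated]) (use conc set_Ls in \<open>auto simp: concordant_on_def\<close>)
  then have "sorted_wrt (\<lambda>x y. position P x < position P y) (map g2 Ls)"
    by (simp add: sorted_wrt_map)
  then show "filter (\<lambda>v. v \<in> g2 ` S) P = map g2 Ls"
    by (intro sorted_wrt_position_unique[OF dP]) (use g2P set_Ls dP sorted_wrt_position_filter in auto)
qed

definition triple_elems :: "nat \<times> nat \<times> nat \<Rightarrow> nat set" where
  "triple_elems T = {fst T, fst (snd T), snd (snd T)}"

text \<open>Blocks have length h: the value v lies in block v div h.\<close>
definition block_triples :: "nat \<Rightarrow> nat set \<Rightarrow> (nat \<times> nat \<times> nat) set \<Rightarrow> bool" where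
  "block_triples h A F \<longleftrightarrow> finite F \<and>
     (\<forall>u v w. (u, v, w) \<in> F \<longrightarrow> u < v \<and> v < w \<and> {u, v, w} \<subseteq> A \<and> u div h = w div h) \<and>
     (\<forall>u v w u' v' w'. (u, v, w) \<in> F \<longrightarrow> (u', v', w') \<in> F \<longrightarrow> (u, v, w) \<noteq> (u', v', w') \<longrightarrow>
        w < u' \<or> w' < u)"

lemma block_triplesI:
  assumes "finite F"
    and "\<And>u v w. (u, v, w) \<in> F \<Longrightarrow> u < v \<and> v < w \<and> {u, v, w} \<subseteq> A \<and> u div h = w div h"
    and "\<And>u v w u' v' w'. (u, v, w) \<in> F \<Longrightarrow> (u', v', w') \<in> F \<Longrightarrow>
           (u, v, w) \<noteq> (u', v', w') \<Longrightarrow> w < u' \<or> w' < u"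
  shows "block_triples h A F"
  unfolding block_triples_def using assms(1) by (intro conjI allI impI assms(2,3))

lemma
  assumes "block_triples h A F"
  shows block_triples_finite: "finite F"
    and block_triples_member:
      "(u, v, w) \<in> F \<Longrightarrow> u < v \<and> v < w \<and> {u, v, w} \<subseteq> A \<and> u div h = w div h"
    and block_triples_disjoint:
      "(u, v, w) \<in> F \<Longrightarrow> (u', v', w') \<in> F \<Longrightarrow> (u, v, w) \<noteq> (u', v', w') \<Longrightarrow> w < u' \<or> w' < u"
  using assms unfolding block_triples_def by simp_all

lemma block_triples_elems:
  assumes "block_triples h A F" "T \<in> F" "x \<in> triple_elems T"
  shows "x \<in> A" "x div h = fst T div h"
proof -
  obtain u v w where T: "T = (u, v, w)" by (cases T) auto
  then have uvw: "u < v" "v < w" "{u, v, w} \<subseteq> A" "u div h = w div h"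
    using assms(1,2) by (auto simp: block_triples_def)
  have "u \<le> x" "x \<le> w" using assms(3) uvw(1,2) by (auto simp: T triple_elems_def)
  then have "u div h \<le> x div h" "x div h \<le> w div h" by (simp_all add: div_le_mono)
  then show "x div h = fst T div h" using uvw(4) by (simp add: T)
  show "x \<in> A" using assms(3) uvw(3) by (auto simp: T triple_elems_def)
qed

lemma block_triples_separated:
  assumes "block_triples h A F" "T \<in> F" "T' \<in> F" "T \<noteq> T'"
    and "x \<in> triple_elems T" "x' \<in> triple_elems T" "y \<in> triple_elems T'" "y' \<in> triple_elems T'"
  shows "x < y \<longleftrightarrow> x' < y'" and "x \<noteq> y"
proof -
  obtain u v w u' v' w' where T: "T = (u, v, w)" "T' = (u', v', w')" by (metis prod_cases3)
  have "u < v" "v < w" "u' < v'" "v' < w'" "w < u' \<or> w' < u"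
    using assms(1-4) unfolding T block_triples_def by simp_all
  with assms(5-8) show "x < y \<longleftrightarrow> x' < y'" "x \<noteq> y"
    unfolding T triple_elems_def by auto
qed

lemma three_smallest:
  fixes B :: "nat set"
  assumes "finite B" "3 \<le> card B"
  obtains u1 u2 u3 where "u1 < u2" "u2 < u3" "{u1, u2, u3} \<subseteq> B"
    "\<And>v. v \<in> B - {u1, u2, u3} \<Longrightarrow> u3 < v"
proof
  define xs where "xs = sorted_list_of_set B"
  have xs: "sorted_wrt (<) xs" "set xs = B" "length xs = card B"
    using assms(1) by (simp_all add: xs_def)
  show "xs ! 0 < xs ! 1" "xs ! 1 < xs ! 2"
    using xs assms(2) by (simp_all add: sorted_wrt_iff_nth_less)
  show "{xs ! 0, xs ! 1, xs ! 2} \<subseteq> B" using xs assms(2) by auto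
  fix v assume v: "v \<in> B - {xs ! 0, xs ! 1, xs ! 2}"
  then obtain j where "j < length xs" "v = xs ! j" using xs(2) by (auto simp: in_set_conv_nth)
  moreover have "2 < j"
  proof (rule ccontr)
    assume "\<not> 2 < j"
    then have "j = 0 \<or> j = 1 \<or> j = 2" by auto
    then show False using v calculation by auto
  qed
  ultimately show "xs ! 2 < v" using xs(1) by (simp add: sorted_wrt_iff_nth_less)
qed

lemma block_triples_mono: "block_triples h A F \<Longrightarrow> A \<subseteq> A' \<Longrightarrow> block_triples h A' F"
proof (rule block_triplesI)
  assume F: "block_triples h A F" and "A \<subseteq> A'"
  show "finite F" using F by (rule block_triples_finite)
  show "u < v \<and> v < w \<and> {u, v, w} \<subseteq> A' \<and> u div h = w div h" if "(u, v, w) \<in> F" for u v w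
    using block_triples_member[OF F that] \<open>A \<subseteq> A'\<close> by auto
  show "w < u' \<or> w' < u" if "(u, v, w) \<in> F" "(u', v', w') \<in> F" "(u, v, w) \<noteq> (u', v', w')"
    for u v w u' v' w'
    using block_triples_disjoint[OF F that] .
qed

lemma block_triples_insert_below:
  assumes F: "block_triples h A F" and "u < v" "v < w" "{u, v, w} \<subseteq> A" "u div h = w div h"
    and below: "\<And>u' v' w'. (u', v', w') \<in> F \<Longrightarrow> w < u'"
  shows "block_triples h A (insert (u, v, w) F)"
proof (rule block_triplesI)
  show "finite (insert (u, v, w) F)" using block_triples_finite[OF F] by simp
  show "u' < v' \<and> v' < w' \<and> {u', v', w'} \<subseteq> A \<and> u' div h = w' div h"
    if "(u', v', w') \<in> insert (u, v, w) F" for u' v' w'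
    using that assms(2-5) block_triples_member[OF F] by auto
  show "w1 < u2 \<or> w2 < u1"
    if "(u1, v1, w1) \<in> insert (u, v, w) F" "(u2, v2, w2) \<in> insert (u, v, w) F"
      "(u1, v1, w1) \<noteq> (u2, v2, w2)" for u1 v1 w1 u2 v2 w2
    using that below block_triples_disjoint[OF F, of u1 v1 w1 u2 v2 w2] by auto
qed

lemma card_div_image_remove_block:
  fixes A :: "nat set"
  assumes "finite A" "a \<in> A"
  shows "card ((\<lambda>v. v div h) ` {v\<in>A. v div h \<noteq> a div h}) + 1 \<le> card ((\<lambda>v. v div h) ` A)"
proof -
  have "card ((\<lambda>v. v div h) ` {v\<in>A. v div h \<noteq> a div h}) \<le> card ((\<lambda>v. v div h) ` A - {a div h})"
    using assms(1) by (intro card_mono) auto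
  also have "\<dots> = card ((\<lambda>v. v div h) ` A) - 1" using assms(2) by (intro card_Diff_singleton) simp
  finally show ?thesis using assms card_gt_0_iff[of "(\<lambda>v. v div h) ` A"] by auto
qed

text \<open>Greedily, block by block from the bottom: take the three smallest elements of the
  lowest block as a triple when it has at least three elements, otherwise discard the
  at most two elements of that block.\<close>
lemma block_triples_exist:
  fixes A :: "nat set"
  assumes "finite A"
  shows "\<exists>F. block_triples h A F \<and> card A \<le> 3 * card F + 2 * card ((\<lambda>v. v div h) ` A)"
  using assms
proof (induction "card A" arbitrary: A rule: less_induct)
  case less
  show ?case
  proof (cases "A = {}")
    case True
    then show ?thesis by (intro exI[of _ "{}"] conjI block_triplesI) auto
  next
    case False
    define \<beta> where "\<beta> = Min A div h"
    define B where "B = {v\<in>A. v div h = \<beta>}"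
    have "Min A \<in> A" using False less.prems by simp
    then have "Min A \<in> B" by (simp add: B_def \<beta>_def)
    then have B: "finite B" "B \<subseteq> A" "0 < card B" using less.prems by (auto simp: B_def card_gt_0_iff)
    have above_\<beta>: "\<beta> < v div h" if "v \<in> A - B" for v
      using that less.prems div_le_mono[of "Min A" v h] by (fastforce simp: B_def \<beta>_def)
    show ?thesis
    proof (cases "3 \<le> card B")
      case True
      then obtain u1 u2 u3 where u: "u1 < u2" "u2 < u3" "{u1, u2, u3} \<subseteq> B"
        and above_u3: "\<And>v. v \<in> B - {u1, u2, u3} \<Longrightarrow> u3 < v"
        using three_smallest[OF B(1)] by blast
      define A' where "A' = A - {u1, u2, u3}"
      have "{u1, u2, u3} \<subseteq> A" "card {u1, u2, u3} = 3" using u B(2) by auto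
      then have card_A': "card A' + 3 = card A"
        using less.prems card_mono[of A "{u1, u2, u3}"] by (simp add: A'_def card_Diff_subset)
      then obtain F where F: "block_triples h A' F"
        and card_F: "card A' \<le> 3 * card F + 2 * card ((\<lambda>v. v div h) ` A')"
        using less.hyps[of A'] less.prems by (auto simp: A'_def)
      have u_block: "u1 div h = \<beta>" "u3 div h = \<beta>" using u by (auto simp: B_def)
      have above_u3': "u3 < v" if "v \<in> A'" for v
      proof (cases "v \<in> B")
        case False
        then have "u3 div h < v div h" using above_\<beta>[of v] that u_block(2) by (auto simp: A'_def)
        then show ?thesis using div_le_mono[of v u3 h] by linarith
      qed (use that above_u3 in \<open>auto simp: A'_def\<close>)
      have "u3 < u'" if "(u', v', w') \<in> F" for u' v' w'
        using block_triples_member[OF F that] above_u3' by simp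
      then have new: "block_triples h A (insert (u1, u2, u3) F)"
        using block_triples_mono[OF F, of A] u u_block B(2)
        by (intro block_triples_insert_below) (auto simp: A'_def)
      have "(u1, u2, u3) \<notin> F" using block_triples_member[OF F] by (auto simp: A'_def)
      then have "card (insert (u1, u2, u3) F) = card F + 1"
        using block_triples_finite[OF F] by simp
      moreover have "card ((\<lambda>v. v div h) ` A') \<le> card ((\<lambda>v. v div h) ` A)"
        using less.prems by (intro card_mono) (auto simp: A'_def)
      ultimately show ?thesis using new card_F card_A' by (intro exI[of _ "insert (u1, u2, u3) F"]) simp
    next
      case False
      define A' where "A' = A - B"
      have card_A': "card A' + card B = card A"
        using B less.prems by (simp add: A'_def card_Diff_subset card_mono)
      then obtain F where F: "block_triples h A' F"
        and card_F: "card A' \<le> 3 * card F + 2 * card ((\<lambda>v. v div h) ` A')"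
        using less.hyps[of A'] less.prems B(3) by (auto simp: A'_def)
      have "A' = {v\<in>A. v div h \<noteq> Min A div h}" by (auto simp: A'_def B_def \<beta>_def)
      then have "card ((\<lambda>v. v div h) ` A') + 1 \<le> card ((\<lambda>v. v div h) ` A)"
        using card_div_image_remove_block[OF less.prems \<open>Min A \<in> A\<close>, of h] by simp
      show ?thesis
      proof (intro exI conjI)
        show "block_triples h A F" using F by (rule block_triples_mono) (simp add: A'_def)
        show "card A \<le> 3 * card F + 2 * card ((\<lambda>v. v div h) ` A)"
          using card_F card_A' False \<open>card ((\<lambda>v. v div h) ` A') + 1 \<le> _\<close> by linarith
      qed
    qed
  qed
qed

lemma inj_on_position_coordinate:
  assumes "distinct P" "block_triples h (set P) F" "\<And>T. T \<in> F \<Longrightarrow> g T \<in> triple_elems T"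
  shows "inj_on (position P \<circ> g) F"
proof (rule inj_onI)
  fix T T' assume TT': "T \<in> F" "T' \<in> F" "(position P \<circ> g) T = (position P \<circ> g) T'"
  then have "g T = g T'"
    using inj_on_position[OF assms(1)] block_triples_elems(1)[OF assms(2)] assms(3)
    by (simp add: inj_on_eq_iff)
  then show "T = T'" using block_triples_separated(2)[OF assms(2) TT'(1,2)] assms(3) TT'(1,2) by blast
qed

lemma block_triples_coordinates_order:
  assumes F: "block_triples h A F" and "T \<in> F" "T' \<in> F"
    and g: "\<And>T. T \<in> F \<Longrightarrow> g1 T \<in> triple_elems T \<and> g2 T \<in> triple_elems T \<and> g1 T \<noteq> g2 T"
  shows "g1 T < g1 T' \<longleftrightarrow> g2 T < g2 T'"
proof (cases "T = T'")
  case False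
  then show ?thesis using block_triples_separated(1)[OF F \<open>T \<in> F\<close> \<open>T' \<in> F\<close>] g assms(2,3) by blast
qed simp

lemma block_triples_coordinates_disjoint:
  assumes F: "block_triples h A F" and "T \<in> F" "T' \<in> F"
    and g: "\<And>T. T \<in> F \<Longrightarrow> g1 T \<in> triple_elems T \<and> g2 T \<in> triple_elems T \<and> g1 T \<noteq> g2 T"
  shows "g1 T \<noteq> g2 T'"
proof (cases "T = T'")
  case False
  then show ?thesis using block_triples_separated(2)[OF F \<open>T \<in> F\<close> \<open>T' \<in> F\<close>] g assms(2,3) by blast
qed (use g assms(2) in blast)

lemma twins_from_concordant_coordinates:
  assumes dP: "distinct P" and F: "block_triples h (set P) F" and "S \<subseteq> F"
    and g: "\<And>T. T \<in> F \<Longrightarrow> g1 T \<in> triple_elems T \<and> g2 T \<in> triple_elems T \<and> g1 T \<noteq> g2 T"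
    and conc: "concordant_on (position P \<circ> g1) (position P \<circ> g2) S"
  shows "\<exists>xs ys. twins P xs ys \<and> length xs = card S \<and> (\<forall>i<length xs. ys ! i div h = xs ! i div h)"
proof -
  have g_in_P: "g1 ` S \<subseteq> set P" "g2 ` S \<subseteq> set P"
    using g \<open>S \<subseteq> F\<close> block_triples_elems(1)[OF F] by blast+
  have g_in_F: "T \<in> S \<Longrightarrow> T \<in> F" for T using \<open>S \<subseteq> F\<close> by blast
  have "inj_on (position P \<circ> g1) F" using inj_on_position_coordinate[OF dP F] g by blast
  then have "inj_on g1 S" using inj_on_imageI2 inj_on_subset \<open>S \<subseteq> F\<close> by blast
  then obtain Ls where Ls: "set Ls = S" "filter (\<lambda>v. v \<in> g1 ` S) P = map g1 Ls"
    "filter (\<lambda>v. v \<in> g2 ` S) P = map g2 Ls"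
    using filter_images_common_order[OF dP g_in_P] conc by blast
  define xs where "xs = map g1 Ls"
  define ys where "ys = map g2 Ls"
  have "distinct Ls" using Ls(2) dP by (metis distinct_filter distinct_map)
  then have length_xs: "length xs = card S" using Ls(1) distinct_card by (fastforce simp: xs_def)
  have "subseq xs P" "subseq ys P" unfolding xs_def ys_def by (metis Ls(2,3) subseq_filter_left)+
  moreover have "order_iso xs ys"
    unfolding order_iso_def
  proof (intro conjI allI impI)
    fix i j assume ij: "i < length xs" "j < length xs"
    then have "Ls ! i \<in> F" "Ls ! j \<in> F" by (metis Ls(1) g_in_F length_map nth_mem xs_def)+
    then show "xs ! i < xs ! j \<longleftrightarrow> ys ! i < ys ! j"
      using block_triples_coordinates_order[OF F _ _ g] ij by (simp add: xs_def ys_def)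
  qed (simp add: xs_def ys_def)
  moreover have "set xs \<inter> set ys = {}"
  proof -
    have "g1 T \<noteq> g2 T'" if "T \<in> S" "T' \<in> S" for T T'
      using block_triples_coordinates_disjoint[OF F _ _ g] that g_in_F by blast
    then show ?thesis using Ls(1) by (auto simp: xs_def ys_def)
  qed
  moreover have "ys ! i div h = xs ! i div h" if "i < length xs" for i
  proof -
    have T: "Ls ! i \<in> F" using that by (metis Ls(1) g_in_F length_map nth_mem xs_def)
    then show ?thesis
      using that g[OF T] block_triples_elems(2)[OF F T] by (simp add: xs_def ys_def)
  qed
  ultimately show ?thesis using length_xs unfolding twins_def by blast
qed

lemma twins_from_block_triples:
  assumes dP: "distinct P" and F: "block_triples h (set P) F"
    and "1 \<le> k" and "(k - 1) ^ 3 < card F"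
  shows "\<exists>xs ys. twins P xs ys \<and> length xs = k \<and> (\<forall>i<length xs. ys ! i div h = xs ! i div h)"
proof -
  define c1 :: "nat \<times> nat \<times> nat \<Rightarrow> nat" where "c1 = fst"
  define c2 :: "nat \<times> nat \<times> nat \<Rightarrow> nat" where "c2 = fst \<circ> snd"
  define c3 :: "nat \<times> nat \<times> nat \<Rightarrow> nat" where "c3 = snd \<circ> snd"
  have coords: "c1 T \<in> triple_elems T" "c2 T \<in> triple_elems T" "c3 T \<in> triple_elems T" for T
    by (simp_all add: c1_def c2_def c3_def triple_elems_def)
  have coords_distinct: "c1 T \<noteq> c2 T" "c1 T \<noteq> c3 T" "c2 T \<noteq> c3 T" if "T \<in> F" for T
  proof -
    obtain u v w where "T = (u, v, w)" by (metis prod_cases3)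
    then show "c1 T \<noteq> c2 T" "c1 T \<noteq> c3 T" "c2 T \<noteq> c3 T"
      using block_triples_member[OF F, of u v w] that by (simp_all add: c1_def c2_def c3_def)
  qed
  obtain S where S: "S \<subseteq> F" "card S = k" and
    "concordant_on (position P \<circ> c1) (position P \<circ> c2) S \<or>
     concordant_on (position P \<circ> c1) (position P \<circ> c3) S \<or>
     concordant_on (position P \<circ> c2) (position P \<circ> c3) S"
    using two_of_three_concordant[OF block_triples_finite[OF F]
        inj_on_position_coordinate[OF dP F coords(1)] inj_on_position_coordinate[OF dP F coords(2)]
        inj_on_position_coordinate[OF dP F coords(3)] assms(3,4)]
    by blast
  then obtain g1 g2 where conc: "concordant_on (position P \<circ> g1) (position P \<circ> g2) S"
    and g: "\<And>T. T \<in> F \<Longrightarrow> g1 T \<in> triple_elems T \<and> g2 T \<in> triple_elems T \<and> g1 T \<noteq> g2 T"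
    using coords coords_distinct by metis
  show ?thesis using twins_from_concordant_coordinates[OF dP F S(1) g conc] by (simp only: S(2))
qed

section \<open>Extending close twins\<close>

lemma order_iso_append:
  assumes "order_iso xs ys" "order_iso a b"
    and cross: "\<And>i j. i < length xs \<Longrightarrow> j < length a \<Longrightarrow>
       (xs ! i < a ! j \<longleftrightarrow> ys ! i < b ! j) \<and> (a ! j < xs ! i \<longleftrightarrow> b ! j < ys ! i)"
  shows "order_iso (xs @ a) (ys @ b)"
proof -
  have len: "length xs = length ys" "length a = length b"
    using assms(1,2) by (auto simp: order_iso_def)
  show ?thesis unfolding order_iso_def
  proof (intro conjI allI impI)
    show "length (xs @ a) = length (ys @ b)" using len by simp
    fix i j assume ij: "i < length (xs @ a)" "j < length (xs @ a)"
    show "(xs @ a) ! i < (xs @ a) ! j \<longleftrightarrow> (ys @ b) ! i < (ys @ b) ! j"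
    proof (cases "i < length xs"; cases "j < length xs")
      assume "i < length xs" "j < length xs"
      then show ?thesis using assms(1) len by (simp add: nth_append order_iso_def)
    next
      assume "i < length xs" "\<not> j < length xs"
      then show ?thesis using cross[of i "j - length xs"] len ij by (simp add: nth_append)
    next
      assume "\<not> i < length xs" "j < length xs"
      then show ?thesis using cross[of j "i - length xs"] len ij by (simp add: nth_append)
    next
      assume "\<not> i < length xs" "\<not> j < length xs"
      then show ?thesis using assms(2) len ij by (simp add: nth_append order_iso_def)
    qed
  qed
qed

lemma less_iff_div_less:
  fixes x a h :: nat
  assumes "a div h \<noteq> x div h"
  shows "x < a \<longleftrightarrow> x div h < a div h"
  using assms div_le_mono[of x a h] div_le_mono[of a x h] by (cases "x < a") auto

lemma block_gap:
  fixes u w v h :: nat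
  assumes "u div h < w div h" "w div h < v div h"
  shows "u + h < v"
proof -
  have "u < (u div h + 1) * h" using assms(1) by (cases "h = 0") (simp_all add: dividend_less_div_times)
  also have "\<dots> \<le> w div h * h" using assms(1) by (intro mult_le_mono1) simp
  finally have "u + h < (w div h + 1) * h" by simp
  also have "\<dots> \<le> v div h * h" using assms(2) by (intro mult_le_mono1) simp
  also have "\<dots> \<le> v" by (rule div_times_less_eq_dividend)
  finally show ?thesis .
qed

lemma same_block_less:
  fixes u v h :: nat
  assumes "0 < h" "u div h = v div h"
  shows "u < v + h"
proof -
  have "u < (u div h + 1) * h" using assms(1) by (simp add: dividend_less_div_times)
  also have "\<dots> = v div h * h + h" using assms(2) by simp
  also have "\<dots> \<le> v + h" by (simp add: div_times_less_eq_dividend)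
  finally show ?thesis .
qed

text \<open>Otherwise the block of x would lie strictly between a and b, which are less than h apart.\<close>
lemma less_iff_close_outside_block:
  fixes x y a b h :: nat
  assumes "x div h = y div h" "a div h \<noteq> x div h" "b div h \<noteq> x div h"
    and "a < b + h" "b < a + h"
  shows "x < a \<longleftrightarrow> y < b"
proof -
  have "x < a \<longleftrightarrow> x div h < a div h" using assms(2) by (rule less_iff_div_less)
  moreover have "y < b \<longleftrightarrow> x div h < b div h" using assms(1,3) less_iff_div_less[of b h y] by simp
  moreover have "x div h < a div h \<longleftrightarrow> x div h < b div h"
  proof
    assume "x div h < a div h"
    then show "x div h < b div h"
      using block_gap[of b h x a] assms(3,4) by (cases "x div h < b div h") auto
  next
    assume "x div h < b div h"
    then show "x div h < a div h"
      using block_gap[of a h x b] assms(2,5) by (cases "x div h < a div h") auto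
  qed
  ultimately show ?thesis by simp
qed

lemma set_subseq: "subseq xs ys \<Longrightarrow> set xs \<subseteq> set ys"
  by (auto dest: list_emb_set)

lemma twins_mono: "twins \<pi> a b \<Longrightarrow> subseq \<pi> \<pi>' \<Longrightarrow> twins \<pi>' a b"
  unfolding twins_def by (meson subseq_order.trans)

lemma close_twins_mono: "close_twins n \<pi> a b \<Longrightarrow> subseq \<pi> \<pi>' \<Longrightarrow> close_twins n \<pi>' a b"
  unfolding close_twins_def using twins_mono by metis

lemma close_twins_append:
  fixes n h :: nat
  assumes twins: "twins P xs ys" and close: "close_twins n Q a b" and disj: "set P \<inter> set Q = {}"
    and h: "real h - 1 \<le> real n powr (2/5)" "real n powr (2/5) < real h"
    and same_block: "\<forall>i<length xs. ys ! i div h = xs ! i div h"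
    and avoid: "\<forall>v \<in> set a \<union> set b. v div h \<notin> (\<lambda>x. x div h) ` set xs"
  shows "close_twins n (P @ Q) (xs @ a) (ys @ b)"
proof -
  have xs: "subseq xs P" "subseq ys P" "order_iso xs ys" "set xs \<inter> set ys = {}"
    using twins by (simp_all add: twins_def)
  have ab: "subseq a Q" "subseq b Q" "order_iso a b" "set a \<inter> set b = {}"
    and close_ab: "\<forall>j<length a. \<bar>real (b ! j) - real (a ! j)\<bar> \<le> real n powr (2/5)"
    using close by (simp_all add: close_twins_def twins_def)
  have len: "length xs = length ys" "length a = length b" using xs(3) ab(3) by (simp_all add: order_iso_def)
  have "0 < real h" using h(2) powr_ge_zero[of "real n" "2/5"] by linarith
  then have "0 < h" by simp
  have iso: "order_iso (xs @ a) (ys @ b)"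
  proof (rule order_iso_append[OF xs(3) ab(3)])
    fix i j assume i: "i < length xs" and j: "j < length a"
    have "a ! j \<in> set a" "b ! j \<in> set b" using j len by simp_all
    then have "a ! j div h \<notin> (\<lambda>x. x div h) ` set xs" "b ! j div h \<notin> (\<lambda>x. x div h) ` set xs"
      using avoid by simp_all
    moreover have "xs ! i div h \<in> (\<lambda>x. x div h) ` set xs" using i by simp
    ultimately have out: "a ! j div h \<noteq> xs ! i div h" "b ! j div h \<noteq> xs ! i div h" by metis+
    have "\<bar>real (b ! j) - real (a ! j)\<bar> < real h" using close_ab j h(2) by force
    then have "real (a ! j) < real (b ! j) + real h" "real (b ! j) < real (a ! j) + real h"
      by linarith+
    then have "a ! j < b ! j + h" "b ! j < a ! j + h" by (simp_all flip: of_nat_add)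
    moreover have xy: "xs ! i div h = ys ! i div h" using same_block i by simp
    ultimately have "xs ! i < a ! j \<longleftrightarrow> ys ! i < b ! j"
      using out by (intro less_iff_close_outside_block)
    moreover have "a ! j \<noteq> xs ! i" "b ! j \<noteq> ys ! i" using out xy by auto
    ultimately show "(xs ! i < a ! j \<longleftrightarrow> ys ! i < b ! j) \<and> (a ! j < xs ! i \<longleftrightarrow> b ! j < ys ! i)"
      by (meson linorder_neqE_nat not_less_iff_gr_or_eq)
  qed
  have sub: "subseq (xs @ a) (P @ Q)" "subseq (ys @ b) (P @ Q)"
    using list_emb_append_mono xs(1,2) ab(1,2) by blast+
  have "set xs \<subseteq> set P" "set ys \<subseteq> set P" "set a \<subseteq> set Q" "set b \<subseteq> set Q"
    using xs(1,2) ab(1,2) by (simp_all add: set_subseq)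
  then have dis: "set (xs @ a) \<inter> set (ys @ b) = {}" using xs(4) ab(4) disj by auto
  have dist: "\<bar>real ((ys @ b) ! i) - real ((xs @ a) ! i)\<bar> \<le> real n powr (2/5)"
    if "i < length (xs @ a)" for i
  proof (cases "i < length xs")
    case True
    have "ys ! i div h = xs ! i div h" using same_block True by simp
    then have "xs ! i < ys ! i + h" "ys ! i < xs ! i + h"
      using same_block_less[OF \<open>0 < h\<close>] by simp_all
    then show ?thesis using True len h(1) by (simp add: nth_append)
  next
    case False
    then show ?thesis using that close_ab len by (simp add: nth_append)
  qed
  show ?thesis using iso sub dis dist by (simp add: close_twins_def twins_def)
qed

section \<open>Size estimates\<close>

lemma card_div_image_le:
  fixes A :: "nat set"
  assumes "A \<subseteq> {..n}"
  shows "card ((\<lambda>v. v div h) ` A) \<le> n div h + 1"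
proof -
  have "(\<lambda>v. v div h) ` A \<subseteq> {..n div h}" using assms div_le_mono by auto
  then have "card ((\<lambda>v. v div h) ` A) \<le> card {..n div h}" by (intro card_mono) simp_all
  then show ?thesis by simp
qed

lemma length_filter_outside_blocks:
  fixes Q xs :: "nat list"
  assumes "distinct Q" "0 < h"
  shows "length Q \<le> length (filter (\<lambda>v. v div h \<notin> (\<lambda>x. x div h) ` set xs) Q) + length xs * h"
proof -
  define U where "U = (\<lambda>x. x div h) ` set xs"
  have "set (filter (\<lambda>v. v div h \<in> U) Q) \<subseteq> (\<Union>\<beta>\<in>U. {\<beta> * h..<\<beta> * h + h})"
  proof
    fix v assume "v \<in> set (filter (\<lambda>v. v div h \<in> U) Q)"
    then have "v div h \<in> U" by simp
    moreover have "v div h * h \<le> v" by (rule div_times_less_eq_dividend)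
    moreover have "v < v div h * h + h"
      using same_block_less[OF assms(2), of v "v div h * h"] assms(2) by (simp add: add.commute)
    ultimately show "v \<in> (\<Union>\<beta>\<in>U. {\<beta> * h..<\<beta> * h + h})" by (intro UN_I[of "v div h"]) auto
  qed
  then have "card (set (filter (\<lambda>v. v div h \<in> U) Q)) \<le> card (\<Union>\<beta>\<in>U. {\<beta> * h..<\<beta> * h + h})"
    by (intro card_mono) (simp_all add: U_def)
  also have "\<dots> \<le> (\<Sum>\<beta>\<in>U. card {\<beta> * h..<\<beta> * h + h})" by (rule card_UN_le) (simp add: U_def)
  also have "\<dots> = card U * h" by simp
  also have "\<dots> \<le> length xs * h"
    using card_image_le[of "set xs" "\<lambda>x. x div h"] card_length[of xs] by (simp add: U_def)
  finally have "length (filter (\<lambda>v. v div h \<in> U) Q) \<le> length xs * h"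
    using distinct_card[OF distinct_filter[OF assms(1)]] by simp
  then show ?thesis using sum_length_filter_compl[of "\<lambda>v. v div h \<notin> U" Q] by (simp add: U_def)
qed

lemma twins_in_prefix:
  assumes "distinct P" "set P \<subseteq> {..n}" "1 \<le> k"
    and enough_triples: "\<And>c. length P \<le> 3 * c + 2 * (n div h + 1) \<Longrightarrow> (k - 1) ^ 3 < c"
  shows "\<exists>xs ys. twins P xs ys \<and> length xs = k \<and> (\<forall>i<length xs. ys ! i div h = xs ! i div h)"
proof -
  obtain F where F: "block_triples h (set P) F"
    and card_F: "card (set P) \<le> 3 * card F + 2 * card ((\<lambda>v. v div h) ` set P)"
    using block_triples_exist by blast
  have "(k - 1) ^ 3 < card F"
    using enough_triples card_F card_div_image_le[OF assms(2), of h] distinct_card[OF assms(1)] by simp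
  then show ?thesis using twins_from_block_triples[OF assms(1) F assms(3)] by blast
qed

text \<open>With s = n^(1/5): k is about s, the block length h is about s^2 and the prefix length
  p is about 5 s^3, chosen so that the blocks met by k twin pairs together with the prefix
  cost at most 7 s^3 elements, while a prefix of length p holds more than (k - 1)^3 triples.\<close>
lemma twin_parameters:
  fixes n :: nat
  assumes "0 < n" "7 * real n powr (3/5) \<le> real n"
  obtains k h p :: nat where "real n powr (1/5) \<le> real k" "1 \<le> k"
    "real h - 1 \<le> real n powr (2/5)" "real n powr (2/5) < real h"
    "real p + real k * real h \<le> 7 * real n powr (3/5)"
    "\<And>c. p \<le> 3 * c + 2 * (n div h + 1) \<Longrightarrow> (k - 1) ^ 3 < c"
proof -
  define s where "s = real n powr (1/5)"
  define t where "t = s\<^sup>2"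
  have "0 < s" using assms(1) by (simp add: s_def)
  have n_t: "real n powr (2/5) = t" by (simp add: s_def t_def power2_eq_square flip: powr_add)
  have s3: "real n powr (3/5) = s ^ 3" by (simp add: s_def power3_eq_cube flip: powr_add)
  have "real n = real n powr (3/5) * real n powr (2/5)" using assms(1) by (simp flip: powr_add)
  then have s5: "real n = s ^ 3 * t" using s3 n_t by simp
  have "s ^ 3 * 7 \<le> s ^ 3 * t" using assms(2) s3 s5 by simp
  then have t7: "7 \<le> t" using \<open>0 < s\<close> by simp
  have s_ge_2: "2 \<le> s"
    by (rule power2_le_imp_le) (use t7 \<open>0 < s\<close> in \<open>simp_all add: t_def\<close>)
  have s3t: "s ^ 3 = s * t" by (simp add: t_def power2_eq_square power3_eq_cube)
  define k where "k = nat \<lceil>s\<rceil>"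
  define h where "h = nat \<lfloor>t\<rfloor> + 1"
  define p where "p = nat \<lceil>5 * s ^ 3\<rceil> + 2"
  have k: "s \<le> real k" "real k < s + 1" "1 \<le> k" using \<open>0 < s\<close> by (auto simp: k_def) linarith+
  have h: "t < real h" "real h \<le> t + 1" using t7 by (auto simp: h_def) linarith
  have "2 * 7 \<le> s * t" using s_ge_2 t7 by (intro mult_mono) auto
  then have "8 \<le> s ^ 3" using s3t by simp
  then have p: "5 * s ^ 3 + 2 \<le> real p" "real p \<le> 5 * s ^ 3 + 3" by (auto simp: p_def) linarith+
  show ?thesis
  proof
    show "real n powr (1/5) \<le> real k" "1 \<le> k" using k by (simp_all add: s_def)
    show "real h - 1 \<le> real n powr (2/5)" "real n powr (2/5) < real h"
      using h by (simp_all add: n_t)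
    have "real k * real h \<le> (s + 1) * (t + 1)" using k h by (intro mult_mono) auto
    moreover have "1 * 6 \<le> (s - 1) * (t - 1)" using s_ge_2 t7 by (intro mult_mono) auto
    moreover have "(s + 1) * (t + 1) = s * t + s + t + 1" "(s - 1) * (t - 1) = s * t - s - t + 1"
      by algebra+
    ultimately show "real p + real k * real h \<le> 7 * real n powr (3/5)"
      using p s3 s3t by linarith
  next
    fix c assume c: "p \<le> 3 * c + 2 * (n div h + 1)"
    have "real (n div h) * t \<le> real (n div h) * real h" using h(1) by (intro mult_left_mono) auto
    also have "\<dots> \<le> real n" by (metis div_times_less_eq_dividend of_nat_le_iff of_nat_mult)
    finally have "real (n div h) \<le> s ^ 3" using s5 t7 by simp
    moreover have "real p \<le> real (3 * c + 2 * (n div h + 1))" using c by (simp only: of_nat_le_iff)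
    then have "real p \<le> 3 * real c + 2 * real (n div h) + 2" by simp
    ultimately have "s ^ 3 \<le> real c" using p(1) by linarith
    moreover have "real (k - 1) ^ 3 < s ^ 3"
      using k \<open>0 < s\<close> by (intro power_strict_mono) (auto simp: of_nat_diff)
    ultimately have "real ((k - 1) ^ 3) < real c" unfolding of_nat_power by linarith
    then show "(k - 1) ^ 3 < c" by (simp only: of_nat_less_iff)
  qed
qed

theorem mainTheorem3:
  fixes n T :: nat and m :: real
  assumes "n > 0"
    and "7 * real n powr (3/5) \<le> m" and "m \<le> real n"
    and "\<forall>S'. S' \<subseteq> {1..n} \<and> real (card S') \<ge> m - 7 * real n powr (3/5) \<longrightarrow>
           (\<forall>\<pi>. is_perm_of \<pi> S' \<longrightarrow> (\<exists>a b. close_twins n \<pi> a b \<and> length a \<ge> T))"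
  shows "\<forall>S. S \<subseteq> {1..n} \<and> real (card S) \<ge> m \<longrightarrow>
           (\<forall>\<pi>. is_perm_of \<pi> S \<longrightarrow>
              (\<exists>a b. close_twins n \<pi> a b \<and> real (length a) \<ge> real T + real n powr (1/5)))"
proof (intro allI impI)
  fix S \<pi> assume S: "S \<subseteq> {1..n} \<and> m \<le> real (card S)" and "is_perm_of \<pi> S"
  then have d\<pi>: "distinct \<pi>" and set\<pi>: "set \<pi> = S" by (simp_all add: is_perm_of_def)
  obtain k h p where k: "real n powr (1/5) \<le> real k" "1 \<le> k"
    and h: "real h - 1 \<le> real n powr (2/5)" "real n powr (2/5) < real h"
    and budget: "real p + real k * real h \<le> 7 * real n powr (3/5)"
    and enough_triples: "\<And>c. p \<le> 3 * c + 2 * (n div h + 1) \<Longrightarrow> (k - 1) ^ 3 < c"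
    using twin_parameters[of n] assms(1-3) by auto
  have "0 < h" using h(2) powr_ge_zero[of "real n" "2/5"] by linarith
  have "0 \<le> real k * real h" by simp
  then have "real p \<le> real (card S)" using budget assms(2) S by linarith
  then have "p \<le> length \<pi>" using distinct_card[OF d\<pi>] set\<pi> by simp
  define P Q where "P = take p \<pi>" and "Q = drop p \<pi>"
  have P: "distinct P" "length P = p" "set P \<subseteq> {..n}"
    using d\<pi> \<open>p \<le> length \<pi>\<close> S set\<pi> set_take_subset[of p \<pi>] by (auto simp: P_def)
  have Q: "distinct Q" "set P \<inter> set Q = {}" "set Q \<subseteq> {1..n}" "length Q + p = card S"
    using d\<pi> S set\<pi> distinct_card[OF d\<pi>] set_drop_subset[of p \<pi>] distinct_append[of P Q]
      \<open>p \<le> length \<pi>\<close>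
    by (auto simp: P_def Q_def)
  obtain xs ys where xs: "twins P xs ys" "length xs = k"
    and same_block: "\<forall>i<length xs. ys ! i div h = xs ! i div h"
    using twins_in_prefix[OF P(1,3) k(2), of h] enough_triples P(2) by blast
  define \<pi>' where "\<pi>' = filter (\<lambda>v. v div h \<notin> (\<lambda>x. x div h) ` set xs) Q"
  have "card S \<le> length \<pi>' + p + k * h"
    using length_filter_outside_blocks[OF Q(1) \<open>0 < h\<close>, of xs] Q(4) xs(2) by (simp add: \<pi>'_def)
  then have "real (card S) \<le> real (length \<pi>' + p + k * h)" by (simp only: of_nat_le_iff)
  moreover have "card (set \<pi>') = length \<pi>'"
    unfolding \<pi>'_def using distinct_card[OF distinct_filter[OF Q(1)]] .
  ultimately have "m - 7 * real n powr (3/5) \<le> real (card (set \<pi>'))" using S budget by simp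
  moreover have "set \<pi>' \<subseteq> {1..n}" "is_perm_of \<pi>' (set \<pi>')" using Q by (auto simp: \<pi>'_def is_perm_of_def)
  ultimately obtain a b where ab: "close_twins n \<pi>' a b" "T \<le> length a" using assms(4) by blast
  have "set a \<union> set b \<subseteq> set \<pi>'" using ab(1) set_subseq by (auto simp: close_twins_def twins_def)
  then have "close_twins n (P @ \<pi>') (xs @ a) (ys @ b)"
    using Q(2) by (intro close_twins_append[OF xs(1) ab(1) _ h same_block]) (auto simp: \<pi>'_def)
  moreover have "subseq (P @ \<pi>') \<pi>"
    using list_emb_append_mono[OF subseq_order.refl subseq_filter_left, of P _ Q]
    by (simp add: P_def Q_def \<pi>'_def)
  ultimately show "\<exists>a b. close_twins n \<pi> a b \<and> real T + real n powr (1/5) \<le> real (length a)"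
    using close_twins_mono ab(2) xs(2) k(1) by fastforce
qed

end
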